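(* Let $G$ be a connected simple graph with $n$ vertices and $n+1$ edges in which two cycles $C_p$ and $C_q$ of lengths $p$ and $q$ share exactly one common vertex (i.e. $G\in\mathcal{B}(p,q)$). If $\max\{p,q\}\ge 4$, then $\operatorname{avm}(G)>\operatorname{avm}(R_n(3,3))$.
   Context: $\operatorname{avm}(G)$ is the average of $|M|$ over all maximal matchings $M$ of $G$ (a matching is maximal if not properly contained in another matching). For $n\ge 6$, $R_n(3,3)$ is the graph obtained from two triangles $uv_1v_2$ and $uw_1w_2$ sharing exactly the vertex $u$ by attaching $n-5$ pendant edges (new leaves) to $v_1$. (Note that $\max\{p,q\}\ge4$ forces $n\ge p+q-1\ge 6$.) *)

theory Defs
  imports Complex_Main
begin

definition simple_graph :: "'a set \<Rightarrow> 'a set set \<Rightarrow> bool" where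
  "simple_graph V E \<longleftrightarrow> finite V \<and>
     (\<forall>e\<in>E. \<exists>x y. e = {x, y} \<and> x \<noteq> y \<and> x \<in> V \<and> y \<in> V)"

definition adj :: "'a set set \<Rightarrow> 'a \<Rightarrow> 'a \<Rightarrow> bool" where
  "adj E x y \<longleftrightarrow> {x, y} \<in> E"

definition connected_graph :: "'a set \<Rightarrow> 'a set set \<Rightarrow> bool" where
  "connected_graph V E \<longleftrightarrow> V \<noteq> {} \<and> (\<forall>x\<in>V. \<forall>y\<in>V. (adj E)\<^sup>*\<^sup>* x y)"

definition is_cycle :: "'a set set \<Rightarrow> 'a list \<Rightarrow> bool" where
  "is_cycle E c \<longleftrightarrow> length c \<ge> 3 \<and> distinct c \<and>
     (\<forall>i < length c. adj E (c ! i) (c ! ((i + 1) mod length c)))"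

definition in_B :: "'a set \<Rightarrow> 'a set set \<Rightarrow> nat \<Rightarrow> nat \<Rightarrow> bool" where
  "in_B V E p q \<longleftrightarrow> simple_graph V E \<and> connected_graph V E \<and> card E = card V + 1 \<and>
     (\<exists>c1 c2. is_cycle E c1 \<and> is_cycle E c2 \<and> length c1 = p \<and> length c2 = q \<and>
        card (set c1 \<inter> set c2) = 1)"

definition matching :: "'a set set \<Rightarrow> 'a set set \<Rightarrow> bool" where
  "matching E M \<longleftrightarrow> M \<subseteq> E \<and> (\<forall>e1\<in>M. \<forall>e2\<in>M. e1 \<noteq> e2 \<longrightarrow> e1 \<inter> e2 = {})"

definition maximal_matching :: "'a set set \<Rightarrow> 'a set set \<Rightarrow> bool" where
  "maximal_matching E M \<longleftrightarrow> matching E M \<and> (\<forall>M'. matching E M' \<and> M \<subseteq> M' \<longrightarrow> M' = M)"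

definition avm :: "'a set set \<Rightarrow> real" where
  "avm E = (\<Sum>M\<in>{M. maximal_matching E M}. real (card M)) / real (card {M. maximal_matching E M})"

text \<open>R_n(3,3): vertices 0..n-1, u = 0, triangles 0,1,2 and 0,3,4, and pendant
  edges from v1 = 1 to the leaves 5,...,n-1.\<close>

definition R33_V :: "nat \<Rightarrow> nat set" where
  "R33_V n = {0..<n}"

definition R33_E :: "nat \<Rightarrow> nat set set" where
  "R33_E n = {{0,1},{0,2},{1,2},{0,3},{0,4},{3,4}} \<union> {{1,k} | k. 5 \<le> k \<and> k < n}"

end

theory Submission
  imports Defs
begin

text \<open>
  Let the two cycles meet in u, the first one of length at least 4. A connected graph with
  n vertices and n + 1 edges has no room for a chord, so the union of the two cycles is
  induced. Three pairwise disjoint edges then show that every maximal matching has at least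
  two edges. A maximal matching with exactly two edges consists of an edge {u, m} and an edge
  e meeting the long cycle, so {u, m} alone covers the other cycle: it is a triangle u d1 d2
  and m is d1 or d2. Replacing {u, m} by {d1, d2} and an edge {u, y} of the long cycle missed
  by e gives a maximal matching with three edges, and each of these arises from at most two
  matchings with two edges. Hence avm(G) is at least 7/3.

  In R_n(3,3) a maximal matching has at most three edges, those with three are
  {1, k}, {0, 2}, {3, 4} for the n - 5 leaves k, while {1, k}, {0, 3} and {1, k}, {0, 4} and
  {0, 1}, {3, 4} give at least 2(n - 5) + 1 maximal matchings with two edges, so
  avm(R_n(3,3)) is below 7/3.
\<close>

section \<open>Maximal matchings and averages\<close>

definition vertex_cover :: "'a set set \<Rightarrow> 'a set \<Rightarrow> bool" where
  "vertex_cover E S \<longleftrightarrow> (\<forall>f\<in>E. f \<inter> S \<noteq> {})"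

lemma maximal_matching_vertex_cover:
  assumes "maximal_matching E M" and "{} \<notin> E"
  shows "vertex_cover E (\<Union>M)"
  unfolding vertex_cover_def
proof
  fix f assume f: "f \<in> E"
  show "f \<inter> \<Union>M \<noteq> {}"
  proof
    assume disj: "f \<inter> \<Union>M = {}"
    have M: "matching E M" using assms(1) unfolding maximal_matching_def by blast
    with f disj have "matching E (insert f M)" unfolding matching_def by blast
    with assms(1) have "f \<in> M" unfolding maximal_matching_def by blast
    with disj have "f = {}" by blast
    with f assms(2) show False by simp
  qed
qed

lemma maximal_matchingI:
  assumes "matching E M" and "vertex_cover E (\<Union>M)"
  shows "maximal_matching E M"
  unfolding maximal_matching_def
proof (intro conjI allI impI)
  fix M' assume M': "matching E M' \<and> M \<subseteq> M'"
  show "M' = M"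
  proof (rule ccontr)
    assume "M' \<noteq> M"
    with M' obtain f where f: "f \<in> M'" "f \<notin> M" by blast
    with M' have "f \<in> E" unfolding matching_def by blast
    with assms(2) obtain g where g: "g \<in> M" "f \<inter> g \<noteq> {}" unfolding vertex_cover_def by blast
    with f have "f \<noteq> g" by blast
    with M' f g show False unfolding matching_def by blast
  qed
qed (fact assms(1))

lemma finite_maximal_matchings:
  assumes "finite E"
  shows "finite {M. maximal_matching E M}"
proof (rule finite_subset)
  show "{M. maximal_matching E M} \<subseteq> Pow E" unfolding maximal_matching_def matching_def by blast
qed (use assms in simp)

lemma ex_maximal_matching:
  assumes "finite E"
  shows "\<exists>M. maximal_matching E M"
proof -
  have "finite {M. matching E M}"
  proof (rule finite_subset)
    show "{M. matching E M} \<subseteq> Pow E" unfolding matching_def by blast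
  qed (use assms in simp)
  moreover have "matching E {}" unfolding matching_def by simp
  ultimately obtain M where "matching E M" "\<forall>M'. matching E M' \<and> M \<subseteq> M' \<longrightarrow> M' = M"
    using finite_has_maximal[of "{M. matching E M}"] by blast
  then show ?thesis unfolding maximal_matching_def by blast
qed

lemma matching_doubleton: "a \<in> E \<Longrightarrow> b \<in> E \<Longrightarrow> a \<inter> b = {} \<Longrightarrow> matching E {a, b}"
  unfolding matching_def by auto

lemma card_matching_edges_at:
  assumes "matching E M" and "finite M"
  shows "card {f\<in>M. v \<in> f} \<le> 1"
  using assms unfolding matching_def by (auto simp: card_le_Suc0_iff_eq)

lemma sum_if_card:
  assumes "finite A"
  shows "(\<Sum>x\<in>A. if P x then a else b) =
    of_nat (card {x\<in>A. P x}) * a + of_nat (card {x\<in>A. \<not> P x}) * (b :: 'b :: comm_semiring_1)"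
  using assms by (simp add: sum.If_cases Int_def conj_commute)

lemma card_eq_card_filter_add:
  assumes "finite A"
  shows "card A = card {x\<in>A. P x} + card {x\<in>A. \<not> P x}"
  using sum_if_card[OF assms, of P "1::nat" 1] by simp

lemma seven_thirds_le_average:
  fixes f :: "'b \<Rightarrow> nat"
  assumes "finite A" and "A \<noteq> {}" and "\<forall>x\<in>A. 2 \<le> f x"
    and "card {x\<in>A. f x = 2} \<le> 2 * card {x\<in>A. f x \<noteq> 2}"
  shows "7/3 \<le> (\<Sum>x\<in>A. real (f x)) / real (card A)"
proof -
  have "real (card {x\<in>A. f x = 2}) * 2 + real (card {x\<in>A. f x \<noteq> 2}) * 3
      = (\<Sum>x\<in>A. if f x = 2 then 2 else 3)"
    by (rule sum_if_card[OF assms(1), symmetric])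
  also have "\<dots> \<le> (\<Sum>x\<in>A. real (f x))"
    using assms(3) by (intro sum_mono) auto
  finally have "7 * real (card A) \<le> 3 * (\<Sum>x\<in>A. real (f x))"
    using assms(4) card_eq_card_filter_add[OF assms(1), of "\<lambda>x. f x = 2"] by linarith
  moreover have "card A > 0" using assms(1,2) by (simp add: card_gt_0_iff)
  ultimately show ?thesis by (simp add: field_simps)
qed

lemma average_less_seven_thirds:
  fixes f :: "'b \<Rightarrow> nat"
  assumes "finite A" and "\<forall>x\<in>A. f x \<le> 3"
    and "2 * card {x\<in>A. f x = 3} < card {x\<in>A. f x \<noteq> 3}"
  shows "(\<Sum>x\<in>A. real (f x)) / real (card A) < 7/3"
proof -
  have "(\<Sum>x\<in>A. real (f x)) \<le> (\<Sum>x\<in>A. if f x = 3 then 3 else 2)"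
  proof (rule sum_mono)
    fix x assume "x \<in> A"
    with assms(2) have "f x \<le> 3" by blast
    then show "real (f x) \<le> (if f x = 3 then 3 else 2)" by simp
  qed
  also have "\<dots> = real (card {x\<in>A. f x = 3}) * 3 + real (card {x\<in>A. f x \<noteq> 3}) * 2"
    by (rule sum_if_card[OF assms(1)])
  finally have "3 * (\<Sum>x\<in>A. real (f x)) < 7 * real (card A)"
    using assms(3) card_eq_card_filter_add[OF assms(1), of "\<lambda>x. f x = 3"] by linarith
  moreover have "card A > 0"
    using assms(3) card_eq_card_filter_add[OF assms(1), of "\<lambda>x. f x = 3"] by linarith
  ultimately show ?thesis by (simp add: field_simps)
qed

section \<open>The graph R_n(3,3)\<close>

lemma finite_R33_E: "finite (R33_E n)"
proof (rule finite_subset)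
  show "R33_E n \<subseteq> Pow {0..<max n 5}" unfolding R33_E_def by auto
qed simp

lemma R33_E_cases:
  assumes "f \<in> R33_E n"
  obtains "f = {0, 1}" | "f = {0, 2}" | "f = {1, 2}" | "f = {0, 3}" | "f = {0, 4}" | "f = {3, 4}"
    | k where "f = {1, k}" "5 \<le> k" "k < n"
  using assms unfolding R33_E_def
  by (elim UnE insertE CollectE exE conjE emptyE) (rule that; assumption)+

lemma R33_edge_cases: "f \<in> R33_E n \<Longrightarrow> 0 \<in> f \<or> 1 \<in> f \<or> f = {3, 4}"
  by (erule R33_E_cases) auto

lemma R33_vertex_cover:
  assumes "0 \<in> S" and "1 \<in> S" and "3 \<in> S \<or> 4 \<in> S"
  shows "vertex_cover (R33_E n) S"
  unfolding vertex_cover_def using assms R33_edge_cases by blast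

lemma R33_maximal_matching_01_34: "maximal_matching (R33_E n) {{0, 1}, {3, 4}}"
proof (rule maximal_matchingI)
  show "matching (R33_E n) {{0, 1}, {3, 4}}" by (rule matching_doubleton) (auto simp: R33_E_def)
  show "vertex_cover (R33_E n) (\<Union>{{0, 1}, {3, 4}})" by (rule R33_vertex_cover) auto
qed

lemma R33_maximal_matching_leaf:
  assumes "5 \<le> k" and "k < n" and "j \<in> {3, 4}"
  shows "maximal_matching (R33_E n) {{1, k}, {0, j}}"
proof (rule maximal_matchingI)
  have "{1, k} \<in> R33_E n" using assms(1,2) unfolding R33_E_def by blast
  moreover have "{0, j} \<in> R33_E n" using assms(3) unfolding R33_E_def by auto
  ultimately show "matching (R33_E n) {{1, k}, {0, j}}"
    using assms by (intro matching_doubleton) auto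
  show "vertex_cover (R33_E n) (\<Union>{{1, k}, {0, j}})" using assms(3) by (intro R33_vertex_cover) auto
qed

text \<open>Every edge of R_n(3,3) contains 0 or 1 or is {3, 4}, and two edges of a matching
  never share that witness, so this labelling is injective on matchings.\<close>

definition R33_label :: "nat set \<Rightarrow> nat" where
  "R33_label f = (if 0 \<in> f then 0 else if 1 \<in> f then 1 else 3)"

lemma R33_label_eq_iff:
  "R33_label f = 0 \<longleftrightarrow> 0 \<in> f"
  "R33_label f = 1 \<longleftrightarrow> 0 \<notin> f \<and> 1 \<in> f"
  "R33_label f = 3 \<longleftrightarrow> 0 \<notin> f \<and> 1 \<notin> f"
  by (simp_all add: R33_label_def)

lemma R33_label_range: "R33_label f \<in> {0, 1, 3}"
  by (simp add: R33_label_def)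

lemma inj_on_R33_label:
  assumes "matching (R33_E n) M"
  shows "inj_on R33_label M"
proof (rule inj_onI, rule ccontr)
  fix f g assume fg: "f \<in> M" "g \<in> M" "R33_label f = R33_label g" "f \<noteq> g"
  with assms have "f \<inter> g = {}" "f \<in> R33_E n" "g \<in> R33_E n" unfolding matching_def by blast+
  from R33_label_range[of f] show False
  proof (elim insertE emptyE)
    assume "R33_label f = 0"
    with fg(3) have "0 \<in> f" "0 \<in> g" using R33_label_eq_iff(1) by metis+
    with \<open>f \<inter> g = {}\<close> show False by blast
  next
    assume "R33_label f = 1"
    with fg(3) have "1 \<in> f" "1 \<in> g" using R33_label_eq_iff(2) by metis+
    with \<open>f \<inter> g = {}\<close> show False by blast
  next
    assume "R33_label f = 3"
    with fg(3) have "0 \<notin> f \<and> 1 \<notin> f" "0 \<notin> g \<and> 1 \<notin> g" using R33_label_eq_iff(3) by metis+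
    with \<open>f \<in> R33_E n\<close> \<open>g \<in> R33_E n\<close> have "f = {3, 4}" "g = {3, 4}"
      using R33_edge_cases by blast+
    with fg(4) show False by simp
  qed
qed

lemma R33_matching_card_le_3:
  assumes "matching (R33_E n) M"
  shows "card M \<le> 3"
proof -
  have "card M = card (R33_label ` M)"
    by (rule card_image[OF inj_on_R33_label[OF assms], symmetric])
  also have "\<dots> \<le> card {0, 1, 3 :: nat}" by (intro card_mono image_subsetI R33_label_range) simp
  finally show ?thesis by simp
qed

lemma R33_matching_edges_at_0_1:
  assumes "matching (R33_E n) M" and "{3, 4} \<in> M" and "f0 \<in> M" and "0 \<in> f0"
    and "f1 \<in> M" and "1 \<in> f1" and "f0 \<noteq> f1"
  shows "f0 = {0, 2}" and "\<exists>k\<in>{5..<n}. f1 = {1, k}"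
proof -
  have M: "M \<subseteq> R33_E n" "\<And>g h. g \<in> M \<Longrightarrow> h \<in> M \<Longrightarrow> g \<noteq> h \<Longrightarrow> g \<inter> h = {}"
    using assms(1) unfolding matching_def by blast+
  have "f0 \<noteq> {3, 4}" "f1 \<noteq> {3, 4}" using assms(4,6) by auto
  then have disj: "f0 \<inter> {3, 4} = {}" "f1 \<inter> {3, 4} = {}" "f0 \<inter> f1 = {}"
    using M(2) assms(2,3,5,7) by metis+
  then have f0: "1 \<notin> f0" "3 \<notin> f0" "4 \<notin> f0" and f1: "0 \<notin> f1" "3 \<notin> f1" "4 \<notin> f1"
    using assms(4,6) by blast+
  have "f0 \<in> R33_E n" "f1 \<in> R33_E n" using M(1) assms(3,5) by blast+
  show "f0 = {0, 2}"
    using \<open>f0 \<in> R33_E n\<close> by (rule R33_E_cases) (use assms(4) f0 in simp_all)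
  with disj(3) have "2 \<notin> f1" by blast
  show "\<exists>k\<in>{5..<n}. f1 = {1, k}"
    using \<open>f1 \<in> R33_E n\<close> by (rule R33_E_cases) (use assms(6) f1 \<open>2 \<notin> f1\<close> in auto)
qed

lemma R33_matching_card_3:
  assumes "matching (R33_E n) M" and "card M = 3"
  shows "\<exists>k\<in>{5..<n}. M = {{1, k}, {0, 2}, {3, 4}}"
proof -
  have inj: "inj_on R33_label M" by (rule inj_on_R33_label[OF assms(1)])
  have "R33_label ` M \<subseteq> {0, 1, 3}" by (intro image_subsetI R33_label_range)
  moreover have "card (R33_label ` M) = card {0, 1, 3 :: nat}"
    using card_image[OF inj] assms(2) by simp
  ultimately have labels: "R33_label ` M = {0, 1, 3}" by (intro card_subset_eq) auto
  have "0 \<in> R33_label ` M" "1 \<in> R33_label ` M" "3 \<in> R33_label ` M" unfolding labels by simp_all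
  then obtain f0 f1 f3 where f: "f0 \<in> M" "R33_label f0 = 0" "f1 \<in> M" "R33_label f1 = 1"
      "f3 \<in> M" "R33_label f3 = 3"
    by (elim imageE) (rule that, assumption+; simp)
  have "f3 \<in> R33_E n" using f(5) assms(1) unfolding matching_def by blast
  then have "f3 = {3, 4}" using f(6) R33_edge_cases by (auto simp: R33_label_eq_iff)
  have "M = {f0, f1, f3}"
  proof
    show "M \<subseteq> {f0, f1, f3}"
    proof
      fix g assume "g \<in> M"
      have "R33_label g \<in> {R33_label f0, R33_label f1, R33_label f3}"
        using R33_label_range[of g] by (simp only: f(2,4,6))
      then obtain h where h: "h \<in> {f0, f1, f3}" "R33_label g = R33_label h" by blast
      with f have "h \<in> M" by blast
      with h show "g \<in> {f0, f1, f3}" using inj_onD[OF inj h(2) \<open>g \<in> M\<close>] by blast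
    qed
  qed (use f in blast)
  have "0 \<in> f0" "1 \<in> f1" using f(2,4) R33_label_eq_iff(1,2) by metis+
  moreover have "f0 \<noteq> f1" using f(2,4) by auto
  moreover have "{3, 4} \<in> M" using f(5) \<open>f3 = {3, 4}\<close> by simp
  ultimately have "f0 = {0, 2}" and "\<exists>k\<in>{5..<n}. f1 = {1, k}"
    using R33_matching_edges_at_0_1[OF assms(1) _ f(1) _ f(3)] by blast+
  then obtain k where "k \<in> {5..<n}" "M = {{1, k}, {0, 2}, {3, 4}}"
    using \<open>M = {f0, f1, f3}\<close> \<open>f3 = {3, 4}\<close> by (auto simp: insert_commute)
  then show ?thesis by blast
qed

lemma card_R33_maximal_matchings_3_le:
  "card {M. maximal_matching (R33_E n) M \<and> card M = 3} \<le> n - 5"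
proof -
  have "M \<in> (\<lambda>k. {{1, k}, {0, 2}, {3, 4}}) ` {5..<n}"
    if "maximal_matching (R33_E n) M" and "card M = 3" for M
  proof -
    have "matching (R33_E n) M" using that(1) unfolding maximal_matching_def by blast
    then show ?thesis using R33_matching_card_3 that(2) by blast
  qed
  then have "{M. maximal_matching (R33_E n) M \<and> card M = 3}
      \<subseteq> (\<lambda>k. {{1, k}, {0, 2}, {3, 4}}) ` {5..<n}"
    by blast
  then have "card {M. maximal_matching (R33_E n) M \<and> card M = 3} \<le> card {5..<n :: nat}"
    by (meson card_image_le card_mono finite_atLeastLessThan finite_imageI order_trans)
  then show ?thesis by simp
qed

lemma card_R33_maximal_matchings_not_3_ge:
  "2 * (n - 5) + 1 \<le> card {M. maximal_matching (R33_E n) M \<and> card M \<noteq> 3}"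
proof -
  let ?leaf = "\<lambda>(k, j). {{1, k}, {0, j :: nat}}"
  have inj: "inj_on ?leaf ({5..<n} \<times> {3, 4})"
    unfolding inj_on_def by (clarsimp simp: doubleton_eq_iff)
  have "{{0, 1}, {3, 4}} \<notin> ?leaf ` ({5..<n} \<times> {3, 4})"
    by (clarsimp simp: doubleton_eq_iff)
  then have "2 * (n - 5) + 1 = card (insert {{0, 1}, {3, 4}} (?leaf ` ({5..<n} \<times> {3, 4})))"
    using card_image[OF inj] by simp
  also have "\<dots> \<le> card {M. maximal_matching (R33_E n) M \<and> card M \<noteq> 3}"
  proof (rule card_mono)
    show "finite {M. maximal_matching (R33_E n) M \<and> card M \<noteq> 3}"
      using finite_maximal_matchings[OF finite_R33_E] by simp
    show "insert {{0, 1}, {3, 4}} (?leaf ` ({5..<n} \<times> {3, 4}))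
        \<subseteq> {M. maximal_matching (R33_E n) M \<and> card M \<noteq> 3}"
      using R33_maximal_matching_01_34 R33_maximal_matching_leaf
      by (auto simp: card_insert_if doubleton_eq_iff)
  qed
  finally show ?thesis .
qed

lemma avm_R33_less_seven_thirds: "avm (R33_E n) < 7/3"
  unfolding avm_def
proof (rule average_less_seven_thirds)
  let ?A = "{M. maximal_matching (R33_E n) M}"
  show "finite ?A" using finite_maximal_matchings[OF finite_R33_E] .
  show "\<forall>M\<in>?A. card M \<le> 3" using R33_matching_card_le_3 unfolding maximal_matching_def by blast
  show "2 * card {M\<in>?A. card M = 3} < card {M\<in>?A. card M \<noteq> 3}"
    using card_R33_maximal_matchings_3_le[of n] card_R33_maximal_matchings_not_3_ge[of n] by simp
qed

section \<open>Sparse connected graphs\<close>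

lemma simple_graph_edgeE:
  assumes "simple_graph V E" and "e \<in> E"
  obtains x y where "e = {x, y}" "x \<noteq> y" "x \<in> V" "y \<in> V"
  using assms unfolding simple_graph_def by blast

lemma simple_graph_edgeD:
  assumes "simple_graph V E" and "{x, y} \<in> E"
  shows "x \<in> V" "y \<in> V" "x \<noteq> y"
  using simple_graph_edgeE[OF assms] by (auto simp: doubleton_eq_iff)

lemma simple_graph_edge_at:
  assumes "simple_graph V E" and "g \<in> E" and "x \<in> g"
  obtains z where "g = {x, z}" "z \<noteq> x"
  using simple_graph_edgeE[OF assms(1,2)] assms(3) by (metis insert_commute insert_iff singletonD)

lemma simple_graph_empty_notin: "simple_graph V E \<Longrightarrow> {} \<notin> E"
  by (auto elim: simple_graph_edgeE)

lemma simple_graph_finite_edges: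
  assumes "simple_graph V E"
  shows "finite E"
proof (rule finite_subset)
  show "E \<subseteq> Pow V" using assms by (auto elim: simple_graph_edgeE)
  show "finite (Pow V)" using assms unfolding simple_graph_def by simp
qed

lemma simple_graph_card_edge: "simple_graph V E \<Longrightarrow> e \<in> E \<Longrightarrow> card e = 2"
  by (auto elim: simple_graph_edgeE)

lemma simple_graph_card_Union_le:
  assumes "simple_graph V E" and "M \<subseteq> E"
  shows "card (\<Union>M) \<le> 2 * card M"
proof -
  have "card (\<Union>M) \<le> sum card M" by (rule card_Union_le_sum_card)
  also have "\<dots> = 2 * card M"
    using assms simple_graph_card_edge[OF assms(1)] by (simp add: subset_iff)
  finally show ?thesis .
qed

lemma simple_graph_finite_Union:
  assumes "simple_graph V E" and "M \<subseteq> E"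
  shows "finite (\<Union>M)"
proof (rule finite_subset)
  show "\<Union>M \<subseteq> V" using assms by (auto elim: simple_graph_edgeE)
  show "finite V" using assms(1) unfolding simple_graph_def by simp
qed

lemma rtranclp_adj_crossing_edge:
  assumes "(adj E)\<^sup>*\<^sup>* x y" and "x \<in> U" and "y \<notin> U"
  obtains a b where "a \<in> U" "b \<notin> U" "{a, b} \<in> E"
  using assms(1,3)
proof (induction rule: rtranclp_induct)
  case base
  with assms(2) show ?case by blast
next
  case (step y z)
  then show ?case unfolding adj_def by (cases "y \<in> U") blast+
qed

text \<open>Each vertex outside a connected set can be attached by an edge leaving the set,
  so growing U to V adds at least one edge per vertex.\<close>

lemma connected_card_inner_edges:
  assumes "simple_graph V E" and "connected_graph V E" and "U \<subseteq> V" and "U \<noteq> {}"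
  shows "card {f\<in>E. f \<subseteq> U} + card (V - U) \<le> card E"
  using assms(3,4)
proof (induction "card (V - U)" arbitrary: U)
  case 0
  have "card {f\<in>E. f \<subseteq> U} \<le> card E"
    using simple_graph_finite_edges[OF assms(1)] by (intro card_mono) auto
  with 0 show ?case by linarith
next
  case (Suc k)
  have finV: "finite V" using assms(1) unfolding simple_graph_def by blast
  have "V - U \<noteq> {}" using Suc.hyps(2) by force
  then obtain y where y: "y \<in> V - U" by blast
  obtain x where x: "x \<in> U" using Suc.prems(2) by blast
  with y Suc.prems(1) assms(2) have "(adj E)\<^sup>*\<^sup>* x y" unfolding connected_graph_def by blast
  with x y obtain a b where ab: "a \<in> U" "b \<notin> U" "{a, b} \<in> E"
    by (auto elim: rtranclp_adj_crossing_edge)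
  have b: "b \<in> V" using simple_graph_edgeD[OF assms(1) ab(3)] by blast
  have "V - insert b U = (V - U) - {b}" by blast
  with Suc.hyps(2) b ab(2) finV have k: "k = card (V - insert b U)" by simp
  have finE: "finite E" using simple_graph_finite_edges[OF assms(1)] .
  have "{a, b} \<notin> {f\<in>E. f \<subseteq> U}" using ab by blast
  with finE have "card {f\<in>E. f \<subseteq> U} + 1 = card (insert {a, b} {f\<in>E. f \<subseteq> U})" by simp
  also have "\<dots> \<le> card {f\<in>E. f \<subseteq> insert b U}"
    using ab finE by (intro card_mono) auto
  finally have "card {f\<in>E. f \<subseteq> U} + 1 \<le> card {f\<in>E. f \<subseteq> insert b U}" .
  moreover have "card {f\<in>E. f \<subseteq> insert b U} + card (V - insert b U) \<le> card E"
    using Suc.hyps(1)[OF k] Suc.prems b by blast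
  ultimately show ?case using Suc.hyps(2) k by linarith
qed

lemma bicyclic_card_inner_edges:
  assumes "simple_graph V E" and "connected_graph V E" and "card E = card V + 1"
    and "U \<subseteq> V"
  shows "card {f\<in>E. f \<subseteq> U} \<le> card U + 1"
proof (cases "U = {}")
  case True
  then have "{f\<in>E. f \<subseteq> U} = {}" using simple_graph_empty_notin[OF assms(1)] by auto
  then show ?thesis by (metis card.empty zero_le)
next
  case False
  have "finite V" using assms(1) unfolding simple_graph_def by blast
  then have "card V = card U + card (V - U)"
    using assms(4) by (metis card_Diff_subset card_mono finite_subset le_add_diff_inverse)
  then show ?thesis using connected_card_inner_edges[OF assms(1,2,4) False] assms(3) by linarith
qed

lemma mod_less_of_less: "i < n \<Longrightarrow> m mod n < (n :: nat)"
  by simp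

lemma Suc_mod_neq: "2 \<le> p \<Longrightarrow> i < p \<Longrightarrow> Suc i mod p \<noteq> i"
  by (auto simp: mod_Suc)

lemma Suc_Suc_mod_neq: "3 \<le> p \<Longrightarrow> i < p \<Longrightarrow> Suc (Suc i mod p) mod p \<noteq> i"
  by (auto simp: mod_Suc)

definition cycle_edges :: "'a list \<Rightarrow> 'a set set" where
  "cycle_edges c = (\<lambda>i. {c ! i, c ! (Suc i mod length c)}) ` {..<length c}"

lemma finite_cycle_edges [simp]: "finite (cycle_edges c)"
  unfolding cycle_edges_def by simp

lemma is_cycle_nth_eq_iff:
  "is_cycle E c \<Longrightarrow> i < length c \<Longrightarrow> j < length c \<Longrightarrow> c ! i = c ! j \<longleftrightarrow> i = j"
  unfolding is_cycle_def by (simp add: nth_eq_iff_index_eq)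

lemma is_cycle_edge: "is_cycle E c \<Longrightarrow> i < length c \<Longrightarrow> {c ! i, c ! (Suc i mod length c)} \<in> E"
  unfolding is_cycle_def adj_def by simp

lemma is_cycle_edge_Suc: "is_cycle E c \<Longrightarrow> Suc i < length c \<Longrightarrow> {c ! i, c ! Suc i} \<in> E"
  using is_cycle_edge[of E c i] by simp

lemma is_cycle_edge_last:
  assumes "is_cycle E c"
  shows "{c ! 0, c ! (length c - 1)} \<in> E"
proof -
  have "length c \<ge> 3" using assms unfolding is_cycle_def by blast
  then have "{c ! (length c - 1), c ! (Suc (length c - 1) mod length c)} \<in> E"
    by (intro is_cycle_edge[OF assms]) simp
  moreover have "Suc (length c - 1) = length c" using \<open>length c \<ge> 3\<close> by simp
  ultimately show ?thesis by (simp add: insert_commute)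
qed

lemma cycle_edges_subset: "is_cycle E c \<Longrightarrow> cycle_edges c \<subseteq> E"
  unfolding cycle_edges_def using is_cycle_edge by blast

lemma cycle_edge_subset_set: "f \<in> cycle_edges c \<Longrightarrow> f \<subseteq> set c"
  unfolding cycle_edges_def by (auto intro: nth_mem mod_less_of_less)

lemma set_cycle_subset:
  assumes "simple_graph V E" and "is_cycle E c"
  shows "set c \<subseteq> V"
proof
  fix x assume "x \<in> set c"
  then obtain i where "i < length c" "x = c ! i" by (auto simp: in_set_conv_nth)
  with assms(2) have "{x, c ! (Suc i mod length c)} \<in> E" by (simp add: is_cycle_edge)
  then show "x \<in> V" using simple_graph_edgeD[OF assms(1)] by blast
qed

lemma doubleton_nth_in_cycle_edges_iff:
  assumes "is_cycle E c" and "i < length c" and "j < length c"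
  shows "{c ! i, c ! j} \<in> cycle_edges c \<longleftrightarrow> j = Suc i mod length c \<or> i = Suc j mod length c"
proof -
  have "{c ! i, c ! j} = {c ! k, c ! (Suc k mod length c)} \<longleftrightarrow>
      (i = k \<and> j = Suc k mod length c) \<or> (j = k \<and> i = Suc k mod length c)"
    if "k < length c" for k
    using that assms is_cycle_nth_eq_iff[OF assms(1)] mod_less_of_less[OF that]
    by (auto simp: doubleton_eq_iff)
  then show ?thesis using assms(2,3) unfolding cycle_edges_def by auto
qed

lemma doubleton_head_in_cycle_edges:
  assumes "is_cycle E c" and "j < length c" and "{c ! 0, c ! j} \<in> cycle_edges c"
  shows "j = 1 \<or> j = length c - 1"
proof -
  have "length c \<ge> 3" using assms(1) unfolding is_cycle_def by blast
  then have "c \<noteq> []" by auto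
  then have "j = Suc 0 mod length c \<or> 0 = Suc j mod length c"
    using doubleton_nth_in_cycle_edges_iff[OF assms(1) _ assms(2), of 0] assms(3) by simp
  with assms(2) \<open>length c \<ge> 3\<close> show ?thesis by (auto simp: mod_Suc split: if_splits)
qed

lemma card_cycle_edges:
  assumes "is_cycle E c"
  shows "card (cycle_edges c) = length c"
  unfolding cycle_edges_def
proof (rule trans[OF card_image], rule inj_onI)
  let ?p = "length c"
  fix i j assume "i \<in> {..<?p}" "j \<in> {..<?p}"
    and eq: "{c ! i, c ! (Suc i mod ?p)} = {c ! j, c ! (Suc j mod ?p)}"
  then have ij: "i < ?p" "j < ?p" "Suc i mod ?p < ?p" "Suc j mod ?p < ?p"
    by (auto intro: mod_less_of_less)
  have p: "?p \<ge> 3" using assms unfolding is_cycle_def by blast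
  from eq have "(i = j \<and> Suc i mod ?p = Suc j mod ?p) \<or> (i = Suc j mod ?p \<and> Suc i mod ?p = j)"
    using is_cycle_nth_eq_iff[OF assms] ij by (auto simp: doubleton_eq_iff)
  then show "i = j" using Suc_Suc_mod_neq[OF p ij(1)] by auto
qed simp

lemma card_cycle_edge:
  assumes "is_cycle E c" and "f \<in> cycle_edges c"
  shows "card f = 2"
proof -
  obtain i where i: "i < length c" "f = {c ! i, c ! (Suc i mod length c)}"
    using assms(2) unfolding cycle_edges_def by blast
  moreover have "length c \<ge> 2" using assms(1) unfolding is_cycle_def by simp
  ultimately have "c ! i \<noteq> c ! (Suc i mod length c)"
    using is_cycle_nth_eq_iff[OF assms(1) i(1) mod_less_of_less[OF i(1)]] Suc_mod_neq by metis
  with i show ?thesis by simp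
qed

lemma is_cycle_rotate:
  assumes "is_cycle E c"
  shows "is_cycle E (rotate k c)"
  unfolding is_cycle_def
proof (intro conjI allI impI)
  let ?p = "length c"
  show "3 \<le> length (rotate k c)" "distinct (rotate k c)"
    using assms unfolding is_cycle_def by auto
  fix i assume "i < length (rotate k c)"
  then have i: "i < ?p" by simp
  have "(k + (i + 1) mod ?p) mod ?p = Suc ((k + i) mod ?p) mod ?p"
    by (simp add: mod_Suc_eq mod_add_right_eq)
  moreover have "(k + i) mod ?p < ?p" "Suc i mod ?p < ?p" using i by (auto intro: mod_less_of_less)
  ultimately show "adj E (rotate k c ! i) (rotate k c ! ((i + 1) mod length (rotate k c)))"
    using assms i unfolding is_cycle_def by (simp add: nth_rotate)
qed

lemma is_cycle_rotate_to:
  assumes "is_cycle E c" and "u \<in> set c"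
  obtains c' where "is_cycle E c'" "c' ! 0 = u" "set c' = set c" "length c' = length c"
proof -
  obtain k where k: "k < length c" "c ! k = u" using assms(2) by (auto simp: in_set_conv_nth)
  then have "rotate k c ! 0 = u" using nth_rotate[of 0 c k] by (cases c) auto
  with is_cycle_rotate[OF assms(1)] show ?thesis by (intro that[of "rotate k c"]) auto
qed

section \<open>Two cycles sharing one vertex\<close>

text \<open>In a connected graph with one more edge than vertices, two cycles sharing one
  vertex already span as many edges as their union has vertices plus one, so there is no
  room for a chord.\<close>

lemma edge_on_two_cycles_is_cycle_edge:
  assumes sg: "simple_graph V E" and "connected_graph V E" and "card E = card V + 1"
    and c: "is_cycle E c" and d: "is_cycle E d" and one: "card (set c \<inter> set d) = 1"
    and "{x, y} \<in> E" and "x \<in> set c \<union> set d" and "y \<in> set c \<union> set d"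
  shows "{x, y} \<in> cycle_edges c \<union> cycle_edges d"
proof (rule ccontr)
  assume chord: "{x, y} \<notin> cycle_edges c \<union> cycle_edges d"
  let ?K = "set c \<union> set d"
  have "card (set c) + card (set d) = card ?K + card (set c \<inter> set d)"
    by (rule card_Un_Int) auto
  then have card_K: "card ?K + 1 = length c + length d"
    using one c d by (simp add: is_cycle_def distinct_card)
  have "cycle_edges c \<inter> cycle_edges d = {}"
  proof (rule ccontr)
    assume "cycle_edges c \<inter> cycle_edges d \<noteq> {}"
    then obtain f where f: "f \<in> cycle_edges c" "f \<in> cycle_edges d" by blast
    then have "card f \<le> card (set c \<inter> set d)"
      by (intro card_mono) (auto dest: cycle_edge_subset_set)
    with card_cycle_edge[OF c f(1)] one show False by simp
  qed
  then have "card (cycle_edges c \<union> cycle_edges d) = length c + length d"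
    by (simp add: card_Un_disjoint card_cycle_edges[OF c] card_cycle_edges[OF d])
  then have "card (insert {x, y} (cycle_edges c \<union> cycle_edges d)) = card ?K + 2"
    using chord card_K by simp
  moreover have "insert {x, y} (cycle_edges c \<union> cycle_edges d) \<subseteq> {f\<in>E. f \<subseteq> ?K}"
    using assms(7-9) cycle_edges_subset[OF c] cycle_edges_subset[OF d]
    by (auto dest: cycle_edge_subset_set)
  then have "card (insert {x, y} (cycle_edges c \<union> cycle_edges d)) \<le> card {f\<in>E. f \<subseteq> ?K}"
    using simple_graph_finite_edges[OF sg] by (intro card_mono) auto
  moreover have "card {f\<in>E. f \<subseteq> ?K} \<le> card ?K + 1"
    using bicyclic_card_inner_edges[OF assms(1-3)] set_cycle_subset[OF sg c]
      set_cycle_subset[OF sg d]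
    by simp
  ultimately show False by linarith
qed

locale two_cycles =
  fixes V :: "'a set" and E :: "'a set set" and c d :: "'a list" and u :: 'a
  assumes simple: "simple_graph V E"
    and cycle_c: "is_cycle E c" and cycle_d: "is_cycle E d"
    and long_c: "4 \<le> length c"
    and c_head: "c ! 0 = u" and d_head: "d ! 0 = u"
    and inter: "set c \<inter> set d = {u}"
    and induced: "\<And>x y. x \<in> set c \<union> set d \<Longrightarrow> y \<in> set c \<union> set d \<Longrightarrow> {x, y} \<in> E \<Longrightarrow>
      {x, y} \<in> cycle_edges c \<union> cycle_edges d"
begin

abbreviation "p \<equiv> length c"
abbreviation "q \<equiv> length d"

lemma length_d_ge_3: "3 \<le> q"
  using cycle_d unfolding is_cycle_def by blast

lemma c_not_Nil [simp]: "c \<noteq> []"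
  using long_c by auto

lemma d_not_Nil [simp]: "d \<noteq> []"
  using length_d_ge_3 by auto

lemma u_in_c [simp]: "u \<in> set c" and u_in_d [simp]: "u \<in> set d"
  using inter by auto

lemma c_nth_eq_iff [simp]: "i < p \<Longrightarrow> j < p \<Longrightarrow> c ! i = c ! j \<longleftrightarrow> i = j"
  by (rule is_cycle_nth_eq_iff[OF cycle_c])

lemma d_nth_eq_iff [simp]: "i < q \<Longrightarrow> j < q \<Longrightarrow> d ! i = d ! j \<longleftrightarrow> i = j"
  by (rule is_cycle_nth_eq_iff[OF cycle_d])

lemma c_nth_eq_u_iff [simp]: "i < p \<Longrightarrow> c ! i = u \<longleftrightarrow> i = 0"
  using c_head c_nth_eq_iff[of i 0] by simp

lemma d_nth_eq_u_iff [simp]: "i < q \<Longrightarrow> d ! i = u \<longleftrightarrow> i = 0"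
  using d_head d_nth_eq_iff[of i 0] by simp

lemma u_eq_c_nth_iff [simp]: "i < p \<Longrightarrow> u = c ! i \<longleftrightarrow> i = 0"
  using c_nth_eq_u_iff by fastforce

lemma u_eq_d_nth_iff [simp]: "i < q \<Longrightarrow> u = d ! i \<longleftrightarrow> i = 0"
  using d_nth_eq_u_iff by fastforce

lemma c_nth_in_d_iff [simp]: "i < p \<Longrightarrow> c ! i \<in> set d \<longleftrightarrow> i = 0"
  using inter c_nth_eq_u_iff nth_mem by blast

lemma d_nth_in_c_iff [simp]: "i < q \<Longrightarrow> d ! i \<in> set c \<longleftrightarrow> i = 0"
  using inter d_nth_eq_u_iff nth_mem by blast

lemma c_nth_eq_d_nth_iff [simp]: "i < p \<Longrightarrow> j < q \<Longrightarrow> c ! i = d ! j \<longleftrightarrow> i = 0 \<and> j = 0"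
  using c_nth_in_d_iff d_nth_eq_u_iff c_head by (metis nth_mem)

lemma c_edge: "Suc i < p \<Longrightarrow> {c ! i, c ! Suc i} \<in> E"
  by (rule is_cycle_edge_Suc[OF cycle_c])

lemma d_edge: "Suc i < q \<Longrightarrow> {d ! i, d ! Suc i} \<in> E"
  by (rule is_cycle_edge_Suc[OF cycle_d])

lemma c_edge_last: "{u, c ! (p - 1)} \<in> E"
  using is_cycle_edge_last[OF cycle_c] by (simp add: c_head)

lemma d_edge_last: "{u, d ! (q - 1)} \<in> E"
  using is_cycle_edge_last[OF cycle_d] by (simp add: d_head)

lemma edge_avoids_a_side:
  assumes "e \<in> E"
  shows "e \<inter> (set c - {u}) = {} \<or> e \<inter> (set d - {u}) = {}"
proof (rule ccontr)
  assume "\<not> ?thesis"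
  then obtain x y where x: "x \<in> e" "x \<in> set c" "x \<noteq> u" and y: "y \<in> e" "y \<in> set d" "y \<noteq> u"
    by blast
  with inter have "x \<noteq> y" by blast
  with x y assms have "e = {x, y}" by (auto elim!: simple_graph_edgeE[OF simple])
  with assms have "{x, y} \<in> cycle_edges c \<union> cycle_edges d" using x y by (intro induced) auto
  then have "y \<in> set c \<or> x \<in> set d" by (auto dest: cycle_edge_subset_set)
  with x y inter show False by blast
qed

lemma u_neighbour_in_c:
  assumes "{u, x} \<in> E" and "x \<in> set c"
  shows "x = c ! 1 \<or> x = c ! (p - 1)"
proof -
  obtain j where j: "j < p" "x = c ! j" using assms(2) by (auto simp: in_set_conv_nth)
  have "j \<noteq> 0" using simple_graph_edgeD(3)[OF simple assms(1)] j by simp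
  have "{c ! 0, c ! j} \<in> cycle_edges c \<union> cycle_edges d"
    using assms(1) j by (intro induced) (auto simp: c_head)
  moreover have "{c ! 0, c ! j} \<notin> cycle_edges d"
    using j \<open>j \<noteq> 0\<close> by (auto dest: cycle_edge_subset_set)
  ultimately show ?thesis using doubleton_head_in_cycle_edges[OF cycle_c j(1)] j(2) by auto
qed

lemma u_neighbour_in_d:
  assumes "{u, x} \<in> E" and "x \<in> set d"
  shows "x = d ! 1 \<or> x = d ! (q - 1)"
proof -
  obtain j where j: "j < q" "x = d ! j" using assms(2) by (auto simp: in_set_conv_nth)
  have "j \<noteq> 0" using simple_graph_edgeD(3)[OF simple assms(1)] j by simp
  have "{d ! 0, d ! j} \<in> cycle_edges c \<union> cycle_edges d"
    using assms(1) j by (intro induced) (auto simp: d_head)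
  moreover have "{d ! 0, d ! j} \<notin> cycle_edges c"
    using j \<open>j \<noteq> 0\<close> by (auto dest: cycle_edge_subset_set)
  ultimately show ?thesis using doubleton_head_in_cycle_edges[OF cycle_d j(1)] j(2) by auto
qed

lemma no_edge_c1_c_last: "{c ! 1, c ! (p - 1)} \<notin> E"
proof
  assume "{c ! 1, c ! (p - 1)} \<in> E"
  then have "{c ! 1, c ! (p - 1)} \<in> cycle_edges c \<union> cycle_edges d"
    using long_c by (intro induced) auto
  moreover have "{c ! 1, c ! (p - 1)} \<notin> cycle_edges d"
    using long_c by (auto dest: cycle_edge_subset_set)
  moreover have "Suc (p - 1) = p" using long_c by simp
  ultimately show False
    using doubleton_nth_in_cycle_edges_iff[OF cycle_c, of 1 "p - 1"] long_c by auto
qed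

lemma matching_Union_card_le: "matching E M \<Longrightarrow> card (\<Union>M) \<le> 2 * card M"
  using simple_graph_card_Union_le[OF simple] unfolding matching_def by blast

lemma matching_finite_Union: "matching E M \<Longrightarrow> finite (\<Union>M)"
  using simple_graph_finite_Union[OF simple] unfolding matching_def by blast

lemma maximal_matching_covers: "maximal_matching E M \<Longrightarrow> vertex_cover E (\<Union>M)"
  using maximal_matching_vertex_cover simple_graph_empty_notin[OF simple] by blast

lemma card_maximal_matching_ge_2:
  assumes "maximal_matching E M"
  shows "2 \<le> card M"
proof (rule ccontr)
  assume "\<not> 2 \<le> card M"
  have M: "matching E M" using assms unfolding maximal_matching_def by blast
  have cover: "vertex_cover E (\<Union>M)" using maximal_matching_covers[OF assms] .
  have "{u, c ! 1} \<in> E" "{c ! 2, c ! 3} \<in> E" "{d ! 1, d ! 2} \<in> E"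
    using c_edge[of 0] c_edge[of 1] c_edge[of 2] d_edge[of 1] long_c length_d_ge_3 c_head
    by (simp_all add: numeral_2_eq_2 numeral_3_eq_3)
  with cover have "{u, c ! 1} \<inter> \<Union>M \<noteq> {}" "{c ! 2, c ! 3} \<inter> \<Union>M \<noteq> {}"
      "{d ! 1, d ! 2} \<inter> \<Union>M \<noteq> {}"
    unfolding vertex_cover_def by blast+
  then obtain x y z where "x \<in> {u, c ! 1}" "y \<in> {c ! 2, c ! 3}" "z \<in> {d ! 1, d ! 2}"
      and xyz: "x \<in> \<Union>M" "y \<in> \<Union>M" "z \<in> \<Union>M"
    by blast
  then have "3 = card {x, y, z}" using long_c length_d_ge_3 by auto
  also have "\<dots> \<le> card (\<Union>M)"
    using xyz matching_finite_Union[OF M] by (intro card_mono) auto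
  also have "\<dots> \<le> 2 * card M" by (rule matching_Union_card_le[OF M])
  finally show False using \<open>\<not> 2 \<le> card M\<close> by linarith
qed

lemma maximal_matching_card_2_covers_u:
  assumes "maximal_matching E M" and "card M = 2"
  shows "u \<in> \<Union>M"
proof (rule ccontr)
  assume u: "u \<notin> \<Union>M"
  have M: "matching E M" using assms(1) unfolding maximal_matching_def by blast
  let ?N = "{c ! 1, c ! (p - 1), d ! 1, d ! (q - 1)}"
  have "{u, x} \<inter> \<Union>M \<noteq> {}" if "{u, x} \<in> E" for x
    using that maximal_matching_covers[OF assms(1)] unfolding vertex_cover_def by blast
  then have "?N \<subseteq> \<Union>M"
    using u c_edge[of 0] d_edge[of 0] c_edge_last d_edge_last long_c length_d_ge_3 c_head d_head
    by auto
  moreover have "card ?N = 4" using long_c length_d_ge_3 by simp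
  moreover have "card (\<Union>M) \<le> 4" using matching_Union_card_le[OF M] assms(2) by simp
  ultimately have N: "\<Union>M = ?N"
    using matching_finite_Union[OF M] by (metis card_seteq)
  have "c ! 1 \<in> \<Union>M" using N by blast
  then obtain g where g: "g \<in> M" "c ! 1 \<in> g" by blast
  moreover have "g \<in> E" using M g unfolding matching_def by blast
  ultimately obtain z where "g = {c ! 1, z}" "z \<noteq> c ! 1" "{c ! 1, z} \<in> E"
    using simple_graph_edge_at[OF simple] by metis
  moreover from this g N have "z \<in> {c ! (p - 1), d ! 1, d ! (q - 1)}" by auto
  ultimately show False
    using no_edge_c1_c_last edge_avoids_a_side[of "{c ! 1, z}"] long_c length_d_ge_3 by auto
qed

lemma maximal_matching_card_2_cases:
  assumes "maximal_matching E M" and "card M = 2"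
  obtains m e where "M = {{u, m}, e}" "{u, m} \<in> E" "e \<in> E" "e \<inter> {u, m} = {}"
    "vertex_cover E ({u, m} \<union> e)"
proof -
  have M: "matching E M" using assms(1) unfolding maximal_matching_def by blast
  obtain g where g: "g \<in> M" "u \<in> g" using maximal_matching_card_2_covers_u[OF assms] by blast
  moreover have "g \<in> E" using M g unfolding matching_def by blast
  ultimately obtain m where m: "g = {u, m}" "{u, m} \<in> E"
    using simple_graph_edge_at[OF simple] by metis
  from assms(2) g(1) obtain e where "M = {g, e}" "e \<noteq> g"
    by (metis card_2_iff doubleton_eq_iff insert_iff singletonD)
  with M m have "M = {{u, m}, e}" "e \<in> E" "e \<inter> {u, m} = {}"
    unfolding matching_def by auto
  moreover have "vertex_cover E ({u, m} \<union> e)"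
    using maximal_matching_covers[OF assms(1)] \<open>M = {{u, m}, e}\<close> by simp
  ultimately show ?thesis using m(2) that by blast
qed

lemma c_edge_avoiding:
  assumes "{u, m} \<in> E"
  obtains f where "f \<in> E" "f \<subseteq> set c - {u, m}"
proof (cases "m = c ! 1")
  case True
  have "{c ! 2, c ! 3} \<in> E" using c_edge[of 2] long_c by (simp add: numeral_3_eq_3)
  moreover have "{c ! 2, c ! 3} \<subseteq> set c - {u, m}" using True long_c by auto
  ultimately show ?thesis by (rule that)
next
  case False
  have "m \<noteq> c ! 2"
  proof
    assume "m = c ! 2"
    with assms long_c have "c ! 2 = c ! 1 \<or> c ! 2 = c ! (p - 1)" by (intro u_neighbour_in_c) auto
    with long_c show False by auto
  qed
  have "{c ! 1, c ! 2} \<in> E" using c_edge[of 1] long_c by (simp add: numeral_2_eq_2)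
  moreover have "{c ! 1, c ! 2} \<subseteq> set c - {u, m}" using False \<open>m \<noteq> c ! 2\<close> long_c by auto
  ultimately show ?thesis by (rule that)
qed

lemma d_triangle_if_hit_by_u_neighbour:
  assumes "{u, m} \<in> E" and hit: "\<And>f. f \<in> E \<Longrightarrow> f \<subseteq> set d - {u} \<Longrightarrow> m \<in> f"
  shows "q = 3" and "m = d ! 1 \<or> m = d ! 2"
proof -
  have d12: "m \<in> {d ! 1, d ! 2}"
    using hit[of "{d ! 1, d ! 2}"] d_edge[of 1] length_d_ge_3 by (simp add: numeral_2_eq_2)
  then show "q = 3"
  proof (rule contrapos_pp)
    assume "q \<noteq> 3"
    with length_d_ge_3 have q: "4 \<le> q" by simp
    then have "m \<in> {d ! 2, d ! 3}"
      using hit[of "{d ! 2, d ! 3}"] d_edge[of 2] by (simp add: numeral_3_eq_3)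
    with d12 q have "m = d ! 2" by auto
    with assms(1) q have "d ! 2 = d ! 1 \<or> d ! 2 = d ! (q - 1)" by (intro u_neighbour_in_d) auto
    with q show "m \<notin> {d ! 1, d ! 2}" by auto
  qed
  from d12 show "m = d ! 1 \<or> m = d ! 2" by simp
qed

text \<open>An edge e covering the rest of the graph together with an edge at u must meet the
  first cycle, hence misses the second one; so the edge at u alone has to cover the second
  cycle, which forces it to be a triangle.\<close>

lemma two_edge_vertex_cover:
  assumes "{u, m} \<in> E" and "e \<in> E" and "e \<inter> {u, m} = {}"
    and cover: "vertex_cover E ({u, m} \<union> e)"
  shows "q = 3" and "m = d ! 1 \<or> m = d ! 2" and "d ! 1 \<notin> e" and "d ! 2 \<notin> e"
proof -
  obtain f where "f \<in> E" "f \<subseteq> set c - {u, m}" using c_edge_avoiding[OF assms(1)] .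
  with cover have "e \<inter> (set c - {u}) \<noteq> {}" unfolding vertex_cover_def by blast
  then have e_d: "e \<inter> (set d - {u}) = {}" using edge_avoids_a_side[OF assms(2)] by blast
  have "m \<in> f" if "f \<in> E" "f \<subseteq> set d - {u}" for f
    using that cover e_d unfolding vertex_cover_def by blast
  then show "q = 3" "m = d ! 1 \<or> m = d ! 2"
    using d_triangle_if_hit_by_u_neighbour[OF assms(1)] by blast+
  show "d ! 1 \<notin> e" "d ! 2 \<notin> e" using e_d length_d_ge_3 \<open>q = 3\<close> by auto
qed

definition merge_at_u :: "'a \<Rightarrow> 'a set set \<Rightarrow> 'a set set" where
  "merge_at_u m M = insert {u, m} {f\<in>M. u \<notin> f \<and> f \<noteq> {d ! 1, d ! 2}}"

text \<open>A maximal matching {{u, m}, e} arises from the maximal matching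
  {e, {u, y}, {d!1, d!2}}, where y is a neighbour of u on the first cycle missed by e.\<close>

lemma maximal_matching_card_2_merge:
  assumes "maximal_matching E M" and "card M = 2"
  obtains M' m where "maximal_matching E M'" "card M' = 3" "m \<in> {d ! 1, d ! 2}"
    "M = merge_at_u m M'"
proof -
  obtain m e where M: "M = {{u, m}, e}" and um: "{u, m} \<in> E" and e: "e \<in> E" "e \<inter> {u, m} = {}"
    and cover: "vertex_cover E ({u, m} \<union> e)"
    using maximal_matching_card_2_cases[OF assms] .
  note shape = two_edge_vertex_cover[OF um e cover]
  define y where "y = (if c ! 1 \<in> e then c ! (p - 1) else c ! 1)"
  have "y \<notin> e"
  proof
    assume "y \<in> e"
    then have "c ! 1 \<in> e \<and> c ! (p - 1) \<in> e" unfolding y_def by (auto split: if_splits)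
    with e(1) long_c have "e = {c ! 1, c ! (p - 1)}"
      by (auto elim!: simple_graph_edgeE[OF simple])
    with e(1) no_edge_c1_c_last show False by simp
  qed
  have uy: "{u, y} \<in> E" using c_edge[of 0] c_edge_last c_head long_c unfolding y_def by auto
  have y: "y \<in> set c" "y \<noteq> u" using long_c unfolding y_def by auto
  define M' where "M' = {e, {u, y}, {d ! 1, d ! 2}}"
  have d12: "{d ! 1, d ! 2} \<in> E" using d_edge[of 1] length_d_ge_3 by (simp add: numeral_2_eq_2)
  have d12_y: "y \<noteq> d ! 1" "y \<noteq> d ! 2" using y length_d_ge_3 by auto
  have "matching E M'"
    unfolding matching_def M'_def using e um uy d12 d12_y \<open>y \<notin> e\<close> shape(3,4) length_d_ge_3
    by auto
  moreover have "vertex_cover E (\<Union>M')"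
    using cover shape(2) unfolding vertex_cover_def M'_def by blast
  ultimately have "maximal_matching E M'" by (rule maximal_matchingI)
  moreover have "card M' = 3"
  proof -
    have "e \<noteq> {u, y}" "e \<noteq> {d ! 1, d ! 2}" "{u, y} \<noteq> {d ! 1, d ! 2}"
      using e(2) shape(3) length_d_ge_3 by (auto simp: doubleton_eq_iff)
    then show ?thesis unfolding M'_def by simp
  qed
  moreover have "M = merge_at_u m M'"
    unfolding merge_at_u_def M'_def M using e(2) shape(3) by auto
  ultimately show ?thesis using shape(2) that by blast
qed

lemma card_maximal_matchings_2_le:
  "card {M. maximal_matching E M \<and> card M = 2} \<le> 2 * card {M. maximal_matching E M \<and> card M = 3}"
proof -
  let ?S = "{M. maximal_matching E M \<and> card M = 3}"
  have fin: "finite ?S"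
    using finite_maximal_matchings[OF simple_graph_finite_edges[OF simple]] by simp
  have "{M. maximal_matching E M \<and> card M = 2} \<subseteq> (\<Union>m\<in>{d ! 1, d ! 2}. merge_at_u m ` ?S)"
    by (blast elim: maximal_matching_card_2_merge)
  then have "card {M. maximal_matching E M \<and> card M = 2}
      \<le> card (\<Union>m\<in>{d ! 1, d ! 2}. merge_at_u m ` ?S)"
    using fin by (intro card_mono) auto
  also have "\<dots> \<le> (\<Sum>m\<in>{d ! 1, d ! 2}. card (merge_at_u m ` ?S))" by (rule card_UN_le) simp
  also have "\<dots> \<le> (\<Sum>m\<in>{d ! 1, d ! 2}. card ?S)" by (intro sum_mono card_image_le fin)
  also have "\<dots> \<le> 2 * card ?S" by (simp add: card_insert_if)
  finally show ?thesis .
qed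

lemma avm_ge_seven_thirds: "7/3 \<le> avm E"
  unfolding avm_def
proof (rule seven_thirds_le_average)
  let ?A = "{M. maximal_matching E M}"
  show "finite ?A" using finite_maximal_matchings[OF simple_graph_finite_edges[OF simple]] .
  show "?A \<noteq> {}" using ex_maximal_matching[OF simple_graph_finite_edges[OF simple]] by simp
  show "\<forall>M\<in>?A. 2 \<le> card M" using card_maximal_matching_ge_2 by simp
  have "card {M. maximal_matching E M \<and> card M = 3} \<le> card {M\<in>?A. card M \<noteq> 2}"
    using \<open>finite ?A\<close> by (intro card_mono) auto
  then show "card {M\<in>?A. card M = 2} \<le> 2 * card {M\<in>?A. card M \<noteq> 2}"
    using card_maximal_matchings_2_le by simp
qed

end

lemma avm_ge_seven_thirds_if_long_cycle:
  assumes "simple_graph V E" and "connected_graph V E" and "card E = card V + 1"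
    and "is_cycle E c" and "is_cycle E d" and "set c \<inter> set d = {u}" and "4 \<le> length c"
  shows "7/3 \<le> avm E"
proof -
  obtain c' where c': "is_cycle E c'" "c' ! 0 = u" "set c' = set c" "length c' = length c"
    using is_cycle_rotate_to[OF assms(4)] assms(6) by blast
  obtain d' where d': "is_cycle E d'" "d' ! 0 = u" "set d' = set d"
    using is_cycle_rotate_to[OF assms(5)] assms(6) by blast
  have "two_cycles V E c' d' u"
  proof
    show "\<And>x y. x \<in> set c' \<union> set d' \<Longrightarrow> y \<in> set c' \<union> set d' \<Longrightarrow> {x, y} \<in> E \<Longrightarrow>
        {x, y} \<in> cycle_edges c' \<union> cycle_edges d'"
      using edge_on_two_cycles_is_cycle_edge[OF assms(1-3) c'(1) d'(1)] c' d' assms(6) by simp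
  qed (use assms c' d' in auto)
  then show ?thesis by (rule two_cycles.avm_ge_seven_thirds)
qed

theorem lemma3p3:
  fixes V :: "'a set" and E :: "'a set set" and p q n :: nat
  assumes "in_B V E p q"
    and "n = card V"
    and "max p q \<ge> 4"
  shows "avm E > avm (R33_E n)"
proof -
  obtain c d where G: "simple_graph V E" "connected_graph V E" "card E = card V + 1"
    and cd: "is_cycle E c" "is_cycle E d" "length c = p" "length d = q" "card (set c \<inter> set d) = 1"
    using assms(1) unfolding in_B_def by blast
  obtain u where u: "set c \<inter> set d = {u}" using cd(5) card_1_singletonE by blast
  have "7/3 \<le> avm E"
  proof (cases "4 \<le> p")
    case True
    then show ?thesis using avm_ge_seven_thirds_if_long_cycle[OF G cd(1,2) u] cd(3) by simp
  next
    case False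
    with assms(3) have "4 \<le> length d" using cd(4) by simp
    moreover have "set d \<inter> set c = {u}" using u by blast
    ultimately show ?thesis using avm_ge_seven_thirds_if_long_cycle[OF G cd(2,1)] by simp
  qed
  \<comment> \<open>The bound for R_n(3,3) holds for every n.\<close>
  with avm_R33_less_seven_thirds[of n] show ?thesis by linarith
qed

end
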